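(* Let $X_1,X_2$ be independent integer random variables with $\mathbb P(X_1=0)=\frac{\sqrt2-1}{\sqrt2}$, $\mathbb P(X_1=1)=\frac1{\sqrt2}$, and $\mathbb P(X_2=-k)=\sqrt2(\sqrt2-1)^{k+1}$ for $k=0,1,2,\dots$, and let $X=X_1+X_2$. Then $\mathbb E(X)=0$, $\operatorname{Var}(X)=\sqrt2$, and for all $x,y\in\mathbb Z$ $$T(x,y)=(\sqrt2+1)^{2-y+x}\,\mathbb P(X=y-x).$$ Equivalently, for every $f\in\ell^1(\mathbb Z)$, $(Tf)(x)=(\sqrt2+1)^2\,\mathbb E\big((\sqrt2+1)^{-X}f(x+X)\big)$.
   Context: $T(x,y)=2$ if $y\le x$, $T(x,y)=1$ if $y=x+1$, $T(x,y)=0$ if $y>x+1$ ($x,y\in\mathbb Z$), and $(Tf)(x)=\sum_{y\in\mathbb Z}T(x,y)f(y)$. *)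

theory Defs
  imports "HOL-Probability.Probability"
begin

definition T :: "int \<Rightarrow> int \<Rightarrow> real" where
  "T x y = (if y \<le> x then 2 else if y = x + 1 then 1 else 0)"

definition T_op :: "(int \<Rightarrow> real) \<Rightarrow> int \<Rightarrow> real" where
  "T_op f x = (\<Sum>\<^sub>\<infinity>y. T x y * f y)"

end

theory Submission
  imports Defs
begin

(* Convolving the two laws, X = X1 + X2 is supported on {..1}, with P(X = 1) = a and
   P(X = -k) = 2 a^(k+2), where a = sqrt 2 - 1. Since (sqrt 2 + 1) a = 1, the weight
   (sqrt 2 + 1)^(2-n) P(X = n) is 0, 1 or 2 exactly as T(x, x + n) is, which gives the kernel
   identity, and summing it against f gives the operator identity. The moments reduce to
   sum k a^k = a/(1-a)^2 and sum k^2 a^k = a(1+a)/(1-a)^3, evaluated using 1 - a = sqrt 2 a. *)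

lemma (in finite_measure) distr_eq_density_point_masses:
  fixes Y :: "'a \<Rightarrow> 'b::countable"
  assumes "Y \<in> measurable M (count_space UNIV)"
  shows "distr M (count_space UNIV) Y
    = density (count_space UNIV) (\<lambda>n. ennreal (measure M {\<omega> \<in> space M. Y \<omega> = n}))"
proof (rule measure_eqI_countable[where A = UNIV])
  fix n :: 'b
  have "Y -` {n} \<inter> space M = {\<omega> \<in> space M. Y \<omega> = n}" by auto
  then show "emeasure (distr M (count_space UNIV) Y) {n}
      = emeasure (density (count_space UNIV) (\<lambda>n. ennreal (measure M {\<omega> \<in> space M. Y \<omega> = n}))) {n}"
    using assms by (simp add: emeasure_distr emeasure_density emeasure_eq_measure)
qed auto

lemma (in finite_measure) has_bochner_integral_countable_valued:
  fixes Y :: "'a \<Rightarrow> 'b::countable" and g :: "'b \<Rightarrow> real"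
  assumes Y: "Y \<in> measurable M (count_space UNIV)"
    and sum: "((\<lambda>n. g n * measure M {\<omega> \<in> space M. Y \<omega> = n}) has_sum S) UNIV"
  shows "has_bochner_integral M (\<lambda>\<omega>. g (Y \<omega>)) S"
proof -
  define p where "p n = measure M {\<omega> \<in> space M. Y \<omega> = n}" for n
  have "(\<lambda>n. g n * p n) summable_on UNIV"
    using sum unfolding p_def by (rule has_sum_imp_summable)
  then have "(\<lambda>n. norm (g n * p n)) summable_on UNIV"
    by (rule summable_on_iff_abs_summable_on_real[THEN iffD1])
  then have abs: "Infinite_Set_Sum.abs_summable_on (\<lambda>n. g n * p n) UNIV"
    by (rule abs_summable_equivalent[THEN iffD1])
  have "has_bochner_integral (count_space UNIV) (\<lambda>n. p n * g n) S"
    using abs infsetsum_infsum[OF abs] infsumI[OF sum]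
    unfolding has_bochner_integral_iff abs_summable_on_def infsetsum_def p_def
    by (simp add: mult.commute)
  then have "has_bochner_integral (distr M (count_space UNIV) Y) g S"
    unfolding distr_eq_density_point_masses[OF Y]
    by (simp add: has_bochner_integral_iff integrable_density integral_density p_def)
  then show ?thesis
    using Y by (simp add: has_bochner_integral_iff integrable_distr_eq integral_distr)
qed

lemma (in prob_space) prob_eq_0_outside_of_has_sum_1:
  assumes [measurable]: "Y \<in> measurable M (count_space UNIV)"
    and sum: "((\<lambda>n. prob {\<omega> \<in> space M. Y \<omega> = n}) has_sum 1) A"
    and "m \<notin> A"
  shows "prob {\<omega> \<in> space M. Y \<omega> = m} = 0"
proof -
  have "(\<Sum>n\<in>F. prob {\<omega> \<in> space M. Y \<omega> = n}) \<le> 1" if "finite F" for F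
  proof -
    have "(\<Sum>n\<in>F. prob {\<omega> \<in> space M. Y \<omega> = n}) = prob (\<Union>n\<in>F. {\<omega> \<in> space M. Y \<omega> = n})"
      using that by (intro finite_measure_finite_Union[symmetric]) (auto simp: disjoint_family_on_def)
    then show ?thesis by simp
  qed
  then have "prob {\<omega> \<in> space M. Y \<omega> = m} + 1 \<le> 1"
    by (intro has_sum_le_finite_sums[OF has_sum_insert[OF \<open>m \<notin> A\<close> sum]])
  then show ?thesis by (simp add: measure_le_0_iff)
qed

lemma (in prob_space) prob_add_eq_sum_of_finite_support:
  fixes Y Z :: "'a \<Rightarrow> 'b::{countable, ab_group_add}"
  assumes [measurable]: "Y \<in> measurable M (count_space UNIV)" "Z \<in> measurable M (count_space UNIV)"
    and indep: "indep_var (count_space UNIV) Y (count_space UNIV) Z"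
    and "finite S" and total: "(\<Sum>i\<in>S. prob {\<omega> \<in> space M. Y \<omega> = i}) = 1"
  shows "prob {\<omega> \<in> space M. Y \<omega> + Z \<omega> = n}
    = (\<Sum>i\<in>S. prob {\<omega> \<in> space M. Y \<omega> = i} * prob {\<omega> \<in> space M. Z \<omega> = n - i})"
proof -
  have "prob {\<omega> \<in> space M. Y \<omega> \<in> S} = (\<Sum>i\<in>S. prob {\<omega> \<in> space M. Y \<omega> = i})"
    using \<open>finite S\<close> by (subst finite_measure_finite_Union[symmetric])
      (auto simp: disjoint_family_on_def intro!: arg_cong[where f = prob])
  then have "AE \<omega> in M. Y \<omega> \<in> S"
    using total by (subst prob_Collect_eq_1[symmetric]) auto
  then have "prob {\<omega> \<in> space M. Y \<omega> + Z \<omega> = n}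
      = prob (\<Union>i\<in>S. {\<omega> \<in> space M. Y \<omega> = i \<and> Z \<omega> = n - i})"
    by (intro measure_eq_AE) (auto simp: algebra_simps)
  also have "\<dots> = (\<Sum>i\<in>S. prob {\<omega> \<in> space M. Y \<omega> = i \<and> Z \<omega> = n - i})"
    using \<open>finite S\<close> by (intro finite_measure_finite_Union) (auto simp: disjoint_family_on_def)
  also have "\<dots> = (\<Sum>i\<in>S. prob {\<omega> \<in> space M. Y \<omega> = i} * prob {\<omega> \<in> space M. Z \<omega> = n - i})"
    using prob_indep_random_variable[OF indep, of "{i}" "{n - i}" for i] by simp
  finally show ?thesis .
qed

lemma geometric_second_deriv_sums:
  fixes z :: "'a::{real_normed_field, banach}"
  assumes "norm z < 1"
  shows "(\<lambda>n. of_nat (Suc n) * of_nat (Suc (Suc n)) * z ^ n) sums (2 / (1 - z) ^ 3)"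
proof -
  have "(\<lambda>n. diffs (\<lambda>n. of_nat (Suc n)) n * z ^ n) sums (2 / (1 - z) ^ 3)"
  proof (rule termdiffs_sums_strong)
    fix z :: 'a assume "norm z < 1"
    then show "(\<lambda>n. of_nat (Suc n) * z ^ n) sums (1 / (1 - z) ^ 2)"
      by (rule geometric_deriv_sums)
  next
    have "1 - z \<noteq> 0" using assms by auto
    then show "((\<lambda>z. 1 / (1 - z) ^ 2) has_field_derivative (2 / (1 - z) ^ 3)) (at z)"
      by (auto intro!: derivative_eq_intros simp: field_simps, algebra)
  qed (use assms in auto)
  then show ?thesis
    unfolding diffs_def by (simp add: mult.assoc)
qed

lemma sums_of_nat_mult_power:
  fixes z :: "'a::{real_normed_field, banach}"
  assumes "norm z < 1"
  shows "(\<lambda>n. of_nat n * z ^ n) sums (z / (1 - z) ^ 2)"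
proof -
  have "1 - z \<noteq> 0" using assms by auto
  have "(\<lambda>n. of_nat (Suc n) * z ^ n - z ^ n) sums (1 / (1 - z) ^ 2 - 1 / (1 - z))"
    using assms by (intro sums_diff geometric_deriv_sums) (simp_all add: geometric_sums)
  also have "1 / (1 - z) ^ 2 - 1 / (1 - z) = z / (1 - z) ^ 2"
    using \<open>1 - z \<noteq> 0\<close> by (simp add: field_simps, algebra)
  finally show ?thesis
    by (simp add: algebra_simps)
qed

lemma sums_of_nat_square_mult_power:
  fixes z :: "'a::{real_normed_field, banach}"
  assumes "norm z < 1"
  shows "(\<lambda>n. of_nat n ^ 2 * z ^ n) sums (z * (1 + z) / (1 - z) ^ 3)"
proof -
  have "1 - z \<noteq> 0" using assms by auto
  have "(\<lambda>n. of_nat (Suc n) * of_nat (Suc (Suc n)) * z ^ n - 3 * (of_nat (Suc n) * z ^ n) + z ^ n)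
      sums (2 / (1 - z) ^ 3 - 3 * (1 / (1 - z) ^ 2) + 1 / (1 - z))"
    using assms
    by (intro sums_add sums_diff sums_mult geometric_second_deriv_sums geometric_deriv_sums)
      (simp_all add: geometric_sums)
  also have "2 / (1 - z) ^ 3 - 3 * (1 / (1 - z) ^ 2) + 1 / (1 - z) = z * (1 + z) / (1 - z) ^ 3"
    using \<open>1 - z \<noteq> 0\<close> by (simp add: field_simps, algebra)
  finally show ?thesis
    by (simp add: algebra_simps power2_eq_square)
qed

lemma has_sum_int_split_nonpos:
  fixes h :: "int \<Rightarrow> 'b::topological_comm_monoid_add"
  assumes "\<And>n. n \<ge> 2 \<Longrightarrow> h n = 0"
    and "((\<lambda>k. h (- int k)) has_sum s) UNIV"
  shows "(h has_sum (h 1 + s)) UNIV"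
proof -
  have "inj (\<lambda>k::nat. - int k)" by (auto intro: injI)
  moreover have "range (\<lambda>k::nat. - int k) = {..0}"
    by (auto intro!: image_eqI[where x = "nat (- _)"])
  ultimately have "(h has_sum s) {..0}"
    using has_sum_reindex[of "\<lambda>k::nat. - int k" UNIV h] assms(2) by (simp add: o_def)
  then have "(h has_sum (h 1 + s)) (insert 1 {..0})"
    by (rule has_sum_insert[rotated]) simp
  then show ?thesis
    by (rule has_sum_cong_neutral[THEN iffD1, rotated -1]) (auto simp: assms(1))
qed

lemma abs_T_le_2: "\<bar>T x y\<bar> \<le> 2"
  by (simp add: T_def)

lemma has_sum_T_op:
  assumes "(\<lambda>y. norm (f y)) summable_on UNIV"
  shows "((\<lambda>n. T x (x + n) * f (x + n)) has_sum T_op f x) UNIV"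
proof -
  have "(\<lambda>y. 2 * norm (f y)) summable_on UNIV"
    using assms by (rule summable_on_cmult_right)
  moreover have "norm (T x y * f y) \<le> 2 * norm (f y)" for y
    unfolding norm_mult by (rule mult_right_mono) (simp_all add: abs_T_le_2)
  ultimately have "(\<lambda>y. norm (T x y * f y)) summable_on UNIV"
    by (rule summable_on_comparison_test) simp_all
  then have "((\<lambda>y. T x y * f y) has_sum T_op f x) UNIV"
    unfolding T_op_def by (intro has_sum_infsum) (rule abs_summable_summable)
  moreover have "bij_betw (\<lambda>n. x + n) UNIV UNIV"
    by (rule bij_betwI[where g = "\<lambda>y. y - x"]) auto
  ultimately show ?thesis
    by (simp add: has_sum_reindex_bij_betw[where f = "\<lambda>y. T x y * f y"])
qed

lemma sqrt2_minus_1_lt_1: "sqrt 2 - 1 < (1::real)"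
  using real_sqrt_less_mono[of 2 4] by (simp add: real_sqrt_four)

lemma sqrt2_plus_1_mult_sqrt2_minus_1: "(sqrt 2 + 1) * (sqrt 2 - 1) = (1::real)"
  by (simp add: algebra_simps)

lemma one_minus_sqrt2_minus_1: "1 - (sqrt 2 - 1) = sqrt 2 * (sqrt 2 - (1::real))"
  by (simp add: algebra_simps)

locale bernoulli_geometric_sum = prob_space M for M :: "'a measure" +
  fixes X1 X2 :: "'a \<Rightarrow> int"
  assumes measurable_X1 [measurable]: "X1 \<in> measurable M (count_space UNIV)"
    and measurable_X2 [measurable]: "X2 \<in> measurable M (count_space UNIV)"
    and indep: "indep_var (count_space UNIV) X1 (count_space UNIV) X2"
    and prob_X1_0: "prob {\<omega> \<in> space M. X1 \<omega> = 0} = (sqrt 2 - 1) / sqrt 2"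
    and prob_X1_1: "prob {\<omega> \<in> space M. X1 \<omega> = 1} = 1 / sqrt 2"
    and prob_X2_nonpos: "\<And>k. prob {\<omega> \<in> space M. X2 \<omega> = - int k} = sqrt 2 * (sqrt 2 - 1) ^ (k + 1)"
begin

lemma measurable_X1_plus_X2 [measurable]: "(\<lambda>\<omega>. X1 \<omega> + X2 \<omega>) \<in> measurable M (count_space UNIV)"
  by measurable

lemma prob_X2_pos:
  assumes "n > 0"
  shows "prob {\<omega> \<in> space M. X2 \<omega> = n} = 0"
proof -
  define a :: real where "a = sqrt 2 - 1"
  have "(\<lambda>k. (sqrt 2 * a) * a ^ k) sums ((sqrt 2 * a) * (1 / (1 - a)))"
    using sqrt2_minus_1_lt_1 unfolding a_def
    by (intro sums_mult geometric_sums) simp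
  also have "(sqrt 2 * a) * (1 / (1 - a)) = 1"
    using one_minus_sqrt2_minus_1 unfolding a_def by simp
  finally have "(\<lambda>k. (sqrt 2 * a) * a ^ k) sums 1" .
  moreover have "prob {\<omega> \<in> space M. X2 \<omega> = - int k} = (sqrt 2 * a) * a ^ k" for k
    unfolding prob_X2_nonpos a_def by simp
  ultimately have "((\<lambda>k. prob {\<omega> \<in> space M. X2 \<omega> = - int k}) has_sum 1) UNIV"
    unfolding a_def by (intro sums_nonneg_imp_has_sum) simp_all
  moreover have "inj (\<lambda>k::nat. - int k)"
    by (auto intro: injI)
  ultimately have "((\<lambda>n. prob {\<omega> \<in> space M. X2 \<omega> = n}) has_sum 1) (range (\<lambda>k::nat. - int k))"
    by (simp add: has_sum_reindex o_def)
  then show ?thesis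
    by (rule prob_eq_0_outside_of_has_sum_1[OF measurable_X2]) (use assms in auto)
qed

lemma prob_X1_plus_X2_eq:
  "prob {\<omega> \<in> space M. X1 \<omega> + X2 \<omega> = n}
    = (sqrt 2 - 1) / sqrt 2 * prob {\<omega> \<in> space M. X2 \<omega> = n}
      + 1 / sqrt 2 * prob {\<omega> \<in> space M. X2 \<omega> = n - 1}"
proof -
  have "(\<Sum>i\<in>{0, 1}. prob {\<omega> \<in> space M. X1 \<omega> = i}) = 1"
    by (simp add: prob_X1_0 prob_X1_1 add_divide_distrib[symmetric])
  from prob_add_eq_sum_of_finite_support[OF measurable_X1 measurable_X2 indep _ this]
  show ?thesis
    by (simp add: prob_X1_0 prob_X1_1)
qed

lemma prob_X1_plus_X2_ge_2: "n \<ge> 2 \<Longrightarrow> prob {\<omega> \<in> space M. X1 \<omega> + X2 \<omega> = n} = 0"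
  by (simp add: prob_X1_plus_X2_eq prob_X2_pos)

lemma prob_X1_plus_X2_1: "prob {\<omega> \<in> space M. X1 \<omega> + X2 \<omega> = 1} = sqrt 2 - 1"
  using prob_X2_nonpos[of 0] by (simp add: prob_X1_plus_X2_eq prob_X2_pos)

lemma prob_X1_plus_X2_nonpos:
  "prob {\<omega> \<in> space M. X1 \<omega> + X2 \<omega> = - int k} = 2 * (sqrt 2 - 1) ^ (k + 2)"
proof -
  have "- int k - 1 = - int (Suc k)" by simp
  then have "prob {\<omega> \<in> space M. X1 \<omega> + X2 \<omega> = - int k}
      = (sqrt 2 - 1) / sqrt 2 * (sqrt 2 * (sqrt 2 - 1) ^ (k + 1))
        + 1 / sqrt 2 * (sqrt 2 * (sqrt 2 - 1) ^ (Suc k + 1))"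
    by (simp only: prob_X1_plus_X2_eq prob_X2_nonpos)
  also have "\<dots> = 2 * (sqrt 2 - 1) ^ (k + 2)"
    by simp
  finally show ?thesis .
qed

lemma has_sum_prob_X1_plus_X2:
  assumes "((\<lambda>k. g (- int k) * (2 * (sqrt 2 - 1) ^ (k + 2))) has_sum s) UNIV"
  shows "((\<lambda>n. g n * prob {\<omega> \<in> space M. X1 \<omega> + X2 \<omega> = n}) has_sum (g 1 * (sqrt 2 - 1) + s)) UNIV"
  using has_sum_int_split_nonpos[of "\<lambda>n. g n * prob {\<omega> \<in> space M. X1 \<omega> + X2 \<omega> = n}" s] assms
  by (simp add: prob_X1_plus_X2_ge_2 prob_X1_plus_X2_1 prob_X1_plus_X2_nonpos)

lemma has_bochner_integral_X1_plus_X2: "has_bochner_integral M (\<lambda>\<omega>. real_of_int (X1 \<omega> + X2 \<omega>)) 0"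
proof -
  define a :: real where "a = sqrt 2 - 1"
  have a: "0 < a" "a < 1" "(1 - a) ^ 2 = 2 * a ^ 2"
    using sqrt2_minus_1_lt_1 one_minus_sqrt2_minus_1
    unfolding a_def by (simp_all add: power_mult_distrib)
  have "((\<lambda>k. real k * a ^ k) has_sum (a / (1 - a) ^ 2)) UNIV"
    using a by (intro sums_nonneg_imp_has_sum sums_of_nat_mult_power) simp_all
  then have "((\<lambda>k. (- 2 * a ^ 2) * (real k * a ^ k)) has_sum (- 2 * a ^ 2) * (a / (1 - a) ^ 2)) UNIV"
    by (rule has_sum_cmult_right)
  also have "(- 2 * a ^ 2) * (a / (1 - a) ^ 2) = - a"
    unfolding a(3) using a(1) by simp
  also have "(\<lambda>k. (- 2 * a ^ 2) * (real k * a ^ k)) = (\<lambda>k. real_of_int (- int k) * (2 * a ^ (k + 2)))"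
    by (simp add: fun_eq_iff power_add power2_eq_square)
  finally have "((\<lambda>k. real_of_int (- int k) * (2 * a ^ (k + 2))) has_sum - a) UNIV" .
  from has_sum_prob_X1_plus_X2[OF this[unfolded a_def]]
  show ?thesis
    by (intro has_bochner_integral_countable_valued) simp_all
qed

lemma has_bochner_integral_X1_plus_X2_square:
  "has_bochner_integral M (\<lambda>\<omega>. (real_of_int (X1 \<omega> + X2 \<omega>))\<^sup>2) (sqrt 2)"
proof -
  define a :: real where "a = sqrt 2 - 1"
  have a: "0 < a" "a < 1" "1 + a = sqrt 2" and one_minus_a: "1 - a = sqrt 2 * a"
    using sqrt2_minus_1_lt_1 one_minus_sqrt2_minus_1 unfolding a_def by simp_all
  have cube: "(1 - a) ^ 3 = 2 * sqrt 2 * a ^ 3"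
    unfolding one_minus_a by (simp add: power_mult_distrib power3_eq_cube)
  have "((\<lambda>k. (real k)\<^sup>2 * a ^ k) has_sum (a * (1 + a) / (1 - a) ^ 3)) UNIV"
    using a by (intro sums_nonneg_imp_has_sum sums_of_nat_square_mult_power) simp_all
  then have "((\<lambda>k. (2 * a ^ 2) * ((real k)\<^sup>2 * a ^ k)) has_sum (2 * a ^ 2) * (a * (1 + a) / (1 - a) ^ 3)) UNIV"
    by (rule has_sum_cmult_right)
  also have "(2 * a ^ 2) * (a * (1 + a) / (1 - a) ^ 3) = 1"
    unfolding a(3) cube using a(1) by (simp add: power2_eq_square power3_eq_cube)
  also have "(\<lambda>k. (2 * a ^ 2) * ((real k)\<^sup>2 * a ^ k)) = (\<lambda>k. (real_of_int (- int k))\<^sup>2 * (2 * a ^ (k + 2)))"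
    by (simp add: fun_eq_iff power_add power2_eq_square)
  finally have "((\<lambda>k. (real_of_int (- int k))\<^sup>2 * (2 * a ^ (k + 2))) has_sum 1) UNIV" .
  from has_sum_prob_X1_plus_X2[OF this[unfolded a_def]]
  show ?thesis
    by (intro has_bochner_integral_countable_valued) simp_all
qed

lemma T_eq_prob_X1_plus_X2:
  "T x y = (sqrt 2 + 1) powi (2 - y + x) * prob {\<omega> \<in> space M. X1 \<omega> + X2 \<omega> = y - x}"
proof (cases "y - x \<le> 0")
  case True
  then obtain k where k: "y - x = - int k"
    by (metis minus_minus nonneg_int_cases neg_0_le_iff_le)
  have "2 - y + x = int (k + 2)"
    using k by simp
  then have "(sqrt 2 + 1) powi (2 - y + x) * prob {\<omega> \<in> space M. X1 \<omega> + X2 \<omega> = y - x}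
      = 2 * ((sqrt 2 + 1) * (sqrt 2 - 1)) ^ (k + 2)"
    unfolding k prob_X1_plus_X2_nonpos by (simp only: power_int_of_nat power_mult_distrib mult_ac)
  then show ?thesis
    using True by (simp add: T_def sqrt2_plus_1_mult_sqrt2_minus_1)
next
  case False
  then consider "y = x + 1" | "y - x \<ge> 2"
    by linarith
  then show ?thesis
    by cases (simp_all add: T_def prob_X1_plus_X2_1 prob_X1_plus_X2_ge_2 sqrt2_plus_1_mult_sqrt2_minus_1)
qed

lemma T_op_eq_expectation:
  assumes "(\<lambda>y. norm (f y)) summable_on UNIV"
  shows "T_op f x = (sqrt 2 + 1)\<^sup>2 *
    (\<integral>\<omega>. (sqrt 2 + 1) powi (- (X1 \<omega> + X2 \<omega>)) * f (x + (X1 \<omega> + X2 \<omega>)) \<partial>M)"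
proof -
  define c :: real where "c = sqrt 2 + 1"
  have "c > 0"
    unfolding c_def by (simp add: add_pos_nonneg)
  have eq: "c powi (- n) * f (x + n) * prob {\<omega> \<in> space M. X1 \<omega> + X2 \<omega> = n}
      = 1 / c\<^sup>2 * (T x (x + n) * f (x + n))" for n
  proof -
    have "c powi (2 - n) = c\<^sup>2 * c powi (- n)"
      using \<open>c > 0\<close> by (simp add: power_int_diff power_int_minus field_simps)
    then show ?thesis
      using T_eq_prob_X1_plus_X2[of x "x + n"] \<open>c > 0\<close> unfolding c_def[symmetric] by simp
  qed
  have "((\<lambda>n. 1 / c\<^sup>2 * (T x (x + n) * f (x + n))) has_sum 1 / c\<^sup>2 * T_op f x) UNIV"
    by (rule has_sum_cmult_right[OF has_sum_T_op[OF assms]])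
  then have "((\<lambda>n. c powi (- n) * f (x + n) * prob {\<omega> \<in> space M. X1 \<omega> + X2 \<omega> = n})
      has_sum 1 / c\<^sup>2 * T_op f x) UNIV"
    by (simp only: eq)
  then have "has_bochner_integral M (\<lambda>\<omega>. c powi (- (X1 \<omega> + X2 \<omega>)) * f (x + (X1 \<omega> + X2 \<omega>)))
      (1 / c\<^sup>2 * T_op f x)"
    by (rule has_bochner_integral_countable_valued[OF measurable_X1_plus_X2])
  then show ?thesis
    using \<open>c > 0\<close> unfolding c_def[symmetric] by (simp add: has_bochner_integral_integral_eq)
qed

end

theorem proposition2p1:
  fixes M :: "'a measure" and X1 X2 :: "'a \<Rightarrow> int"
  assumes "prob_space M"
    and "X1 \<in> measurable M (count_space UNIV)"
    and "X2 \<in> measurable M (count_space UNIV)"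
    and "prob_space.indep_var M (count_space UNIV) X1 (count_space UNIV) X2"
    and "measure M {\<omega> \<in> space M. X1 \<omega> = 0} = (sqrt 2 - 1) / sqrt 2"
    and "measure M {\<omega> \<in> space M. X1 \<omega> = 1} = 1 / sqrt 2"
    and "\<forall>k::nat. measure M {\<omega> \<in> space M. X2 \<omega> = - int k} = sqrt 2 * (sqrt 2 - 1) ^ (k + 1)"
  shows "integrable M (\<lambda>\<omega>. real_of_int (X1 \<omega> + X2 \<omega>))
    \<and> (\<integral>\<omega>. real_of_int (X1 \<omega> + X2 \<omega>) \<partial>M) = 0
    \<and> integrable M (\<lambda>\<omega>. (real_of_int (X1 \<omega> + X2 \<omega>))\<^sup>2)
    \<and> (\<integral>\<omega>. (real_of_int (X1 \<omega> + X2 \<omega>) - (\<integral>\<omega>'. real_of_int (X1 \<omega>' + X2 \<omega>') \<partial>M))\<^sup>2 \<partial>M) = sqrt 2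
    \<and> (\<forall>x y. T x y = (sqrt 2 + 1) powi (2 - y + x) * measure M {\<omega> \<in> space M. X1 \<omega> + X2 \<omega> = y - x})
    \<and> (\<forall>f :: int \<Rightarrow> real. (\<lambda>y. norm (f y)) summable_on UNIV \<longrightarrow>
         (\<forall>x. T_op f x = (sqrt 2 + 1)\<^sup>2 *
            (\<integral>\<omega>. (sqrt 2 + 1) powi (- (X1 \<omega> + X2 \<omega>)) * f (x + (X1 \<omega> + X2 \<omega>)) \<partial>M)))"
proof -
  interpret bernoulli_geometric_sum M X1 X2
    using assms by (simp add: bernoulli_geometric_sum_def bernoulli_geometric_sum_axioms_def)
  show ?thesis
    using has_bochner_integral_X1_plus_X2 has_bochner_integral_X1_plus_X2_square T_eq_prob_X1_plus_X2 T_op_eq_expectation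
    by (simp add: has_bochner_integral_iff)
qed

end
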